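(* Let $d\ge1$ and fix $\gamma>0$. Then for every integer $k\ge0$, \[ \lim_{\nu\to+\infty}\alpha_k^{(\nu,\gamma)}=\begin{cases}1,&k=0,\\0,&k\neq0.\end{cases} \]
   Context: For $\nu>0$, $\alpha_k^{(\nu,\gamma)}=\frac{\Gamma(k+\frac d2)}{k!\,\Gamma(\frac d2)\Gamma(\nu)}\gamma^{2k}\int_0^{\infty}e^{-a}a^{\nu+\frac d2-1}(a+\gamma^2)^{-k-\frac d2}\,da$. *)

theory Defs
  imports "HOL-Analysis.Analysis"
begin

definition alpha :: "nat \<Rightarrow> real \<Rightarrow> real \<Rightarrow> nat \<Rightarrow> real" where
  "alpha d \<nu> \<gamma> k =
     Gamma (real k + real d / 2) / (fact k * Gamma (real d / 2) * Gamma \<nu>) * \<gamma> ^ (2 * k) *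
     (LINT a:{0<..}|lborel. exp (- a) * a powr (\<nu> + real d / 2 - 1)
                            * (a + \<gamma>\<^sup>2) powr (- real k - real d / 2))"

end

theory Submission
  imports Defs "HOL-Real_Asymp.Real_Asymp"
begin

text \<open>Write s = d/2, g = \<gamma>^2 and I(\<nu>) for the integral in alpha, so that alpha is a constant
  (equal to 1 for k = 0) times I(\<nu>)/\<Gamma>(\<nu>). As a \<le> a + g and g \<le> a + g, the integrand is at most
  g^-k e^-a a^(\<nu>-1), and for k \<ge> 1 also at most g^(1-k) e^-a a^(\<nu>-2); for k = 0 the estimate
  (a/(a+g))^s \<ge> 1 - s g/a gives a matching lower bound. Integrating against the Gamma integrals and
  using \<Gamma>(\<nu>) = (\<nu>-1) \<Gamma>(\<nu>-1), the ratio I(\<nu>)/\<Gamma>(\<nu>) lies between 1 - s g/(\<nu>-1) and 1 when k = 0,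
  and between 0 and g^(1-k)/(\<nu>-1) when k \<ge> 1.\<close>

definition alpha_integral :: "real \<Rightarrow> real \<Rightarrow> real \<Rightarrow> nat \<Rightarrow> real" where
  "alpha_integral \<nu> s g k =
     (LINT a:{0<..}|lborel. exp (- a) * a powr (\<nu> + s - 1) * (a + g) powr (- real k - s))"

lemma alpha_eq_alpha_integral:
  "alpha d \<nu> \<gamma> k = Gamma (real k + real d / 2) / (fact k * Gamma (real d / 2)) * \<gamma> ^ (2 * k)
     * (alpha_integral \<nu> (real d / 2) (\<gamma>\<^sup>2) k / Gamma \<nu>)"
  by (simp add: alpha_def alpha_integral_def)

lemma alpha_integrand_le:
  fixes a g s \<nu> :: real and k :: nat
  assumes "a > 0" "g > 0" "s \<ge> 0"
  shows "exp (- a) * a powr (\<nu> + s - 1) * (a + g) powr (- real k - s)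
         \<le> g powr (- real k) * (exp (- a) * a powr (\<nu> - 1))"
proof -
  have "s * ln a + real k * ln g \<le> (real k + s) * ln (a + g)"
    using mult_left_mono[of "ln a" "ln (a + g)" s] mult_left_mono[of "ln g" "ln (a + g)" "real k"] assms
    by (simp add: algebra_simps)
  then have "exp ((\<nu> + s - 1) * ln a + (- real k - s) * ln (a + g))
             \<le> exp (- real k * ln g + (\<nu> - 1) * ln a)"
    by (simp add: algebra_simps)
  then show ?thesis
    using assms by (simp add: powr_def exp_add[symmetric] algebra_simps)
qed

lemma alpha_integrand_le_pos_index:
  fixes a g s \<nu> :: real and k :: nat
  assumes "a > 0" "g > 0" "s \<ge> 0" "k \<ge> 1"
  shows "exp (- a) * a powr (\<nu> + s - 1) * (a + g) powr (- real k - s)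
         \<le> g powr (1 - real k) * (exp (- a) * a powr (\<nu> - 2))"
proof -
  have "(s + 1) * ln a + (real k - 1) * ln g \<le> (real k + s) * ln (a + g)"
    using mult_left_mono[of "ln a" "ln (a + g)" "s + 1"]
      mult_left_mono[of "ln g" "ln (a + g)" "real k - 1"] assms
    by (simp add: algebra_simps)
  then have "exp ((\<nu> + s - 1) * ln a + (- real k - s) * ln (a + g))
             \<le> exp ((1 - real k) * ln g + (\<nu> - 2) * ln a)"
    by (simp add: algebra_simps)
  then show ?thesis
    using assms by (simp add: powr_def exp_add[symmetric] algebra_simps)
qed

lemma alpha_integrand_zero_index_ge:
  fixes a g s \<nu> :: real
  assumes a: "a > 0" and g: "g > 0" and s: "s \<ge> 0"
  shows "exp (- a) * a powr (\<nu> - 1) - s * g * (exp (- a) * a powr (\<nu> - 2))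
         \<le> exp (- a) * a powr (\<nu> + s - 1) * (a + g) powr (- s)"
proof -
  have "ln (a + g) - ln a = ln ((a + g) / a)"
    using a g by (simp add: ln_div)
  also have "\<dots> = ln (1 + g / a)"
    using a by (simp add: field_simps)
  also have "\<dots> \<le> g / a"
    using a g by (intro ln_add_one_self_le_self) simp
  finally have log_ratio: "ln (a + g) - ln a \<le> g / a" .
  have "1 - s * (g / a) \<le> exp (- (s * (g / a)))"
    using exp_ge_add_one_self[of "- (s * (g / a))"] by simp
  also have "\<dots> \<le> exp (s * ln a - s * ln (a + g))"
    using mult_left_mono[OF log_ratio s] by (simp add: algebra_simps)
  finally have ratio_ge: "1 - s * (g / a) \<le> exp (s * ln a - s * ln (a + g))" .
  have "a powr (\<nu> - 1) = a powr (\<nu> - 2) * a"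
    using a powr_add[of a "\<nu> - 2" 1] by simp
  then have "exp (- a) * a powr (\<nu> - 1) - s * g * (exp (- a) * a powr (\<nu> - 2))
        = exp (- a) * a powr (\<nu> - 1) * (1 - s * (g / a))"
    using a by (simp add: field_simps)
  also have "\<dots> \<le> exp (- a) * a powr (\<nu> - 1) * exp (s * ln a - s * ln (a + g))"
    using ratio_ge a by (intro mult_left_mono) auto
  also have "\<dots> = exp (- a) * a powr (\<nu> + s - 1) * (a + g) powr (- s)"
    using a g by (simp add: powr_def exp_add exp_diff exp_minus field_simps)
  finally show ?thesis .
qed

lemma Gamma_set_integral:
  fixes x :: real
  assumes "x > 0"
  shows "set_integrable lborel {0<..} (\<lambda>a. exp (- a) * a powr (x - 1))"
    and "(LINT a:{0<..}|lborel. exp (- a) * a powr (x - 1)) = Gamma x"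
proof -
  have "has_bochner_integral lborel (\<lambda>t. indicator {0..} t * t powr (x - 1) / exp t) (Gamma x)"
    by (rule has_bochner_integral_nn_integral)
       (use assms in \<open>auto simp: Gamma_conv_nn_integral_real less_imp_le\<close>)
  moreover have "(\<lambda>t. indicator {0<..} t *\<^sub>R (exp (- t) * t powr (x - 1)))
               = (\<lambda>t. indicator {0..} t * t powr (x - 1) / exp t)"
    by (rule ext) (auto simp: indicator_def exp_minus field_simps)
  ultimately show "set_integrable lborel {0<..} (\<lambda>a. exp (- a) * a powr (x - 1))"
    and "(LINT a:{0<..}|lborel. exp (- a) * a powr (x - 1)) = Gamma x"
    unfolding set_integrable_def set_lebesgue_integral_def has_bochner_integral_iff by simp_all
qed

lemma alpha_integrand_integrable:
  fixes \<nu> s g :: real and k :: nat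
  assumes "\<nu> > 0" "g > 0" "s \<ge> 0"
  shows "set_integrable lborel {0<..}
           (\<lambda>a. exp (- a) * a powr (\<nu> + s - 1) * (a + g) powr (- real k - s))"
proof (rule set_integrable_bound)
  show "set_integrable lborel {0<..} (\<lambda>a. g powr (- real k) * (exp (- a) * a powr (\<nu> - 1)))"
    using Gamma_set_integral(1)[OF \<open>\<nu> > 0\<close>] by simp
  show "set_borel_measurable lborel {0<..}
          (\<lambda>a. exp (- a) * a powr (\<nu> + s - 1) * (a + g) powr (- real k - s))"
    unfolding set_borel_measurable_def by measurable
  show "AE a in lborel. a \<in> {0<..} \<longrightarrow>
          norm (exp (- a) * a powr (\<nu> + s - 1) * (a + g) powr (- real k - s))
          \<le> norm (g powr (- real k) * (exp (- a) * a powr (\<nu> - 1)))"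
    using alpha_integrand_le assms by (intro AE_I2) auto
qed

lemma alpha_integral_nonneg:
  assumes "\<nu> > 0" "g > 0" "s \<ge> 0"
  shows "0 \<le> alpha_integral \<nu> s g k"
  using set_integral_mono[OF _ alpha_integrand_integrable[OF assms], of "\<lambda>_. 0"]
  by (simp add: alpha_integral_def set_integrable_def set_lebesgue_integral_def)

lemma alpha_integral_zero_index_le:
  assumes "\<nu> > 0" "g > 0" "s \<ge> 0"
  shows "alpha_integral \<nu> s g 0 \<le> Gamma \<nu>"
proof -
  have "alpha_integral \<nu> s g 0 \<le> (LINT a:{0<..}|lborel. exp (- a) * a powr (\<nu> - 1))"
    unfolding alpha_integral_def
    using alpha_integrand_integrable[OF assms, of 0] Gamma_set_integral(1)[of \<nu>]
      alpha_integrand_le[of _ g s \<nu> 0] assms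
    by (intro set_integral_mono) auto
  then show ?thesis
    using Gamma_set_integral(2)[of \<nu>] assms by simp
qed

lemma alpha_integral_zero_index_ge:
  assumes "\<nu> > 1" "g > 0" "s \<ge> 0"
  shows "Gamma \<nu> - s * g * Gamma (\<nu> - 1) \<le> alpha_integral \<nu> s g 0"
proof -
  have int1: "set_integrable lborel {0<..} (\<lambda>a. exp (- a) * a powr (\<nu> - 1))"
    and int2: "set_integrable lborel {0<..} (\<lambda>a. exp (- a) * a powr (\<nu> - 2))"
    using Gamma_set_integral(1)[of \<nu>] Gamma_set_integral(1)[of "\<nu> - 1"] assms
    by (simp_all add: diff_diff_eq)
  have "Gamma \<nu> - s * g * Gamma (\<nu> - 1)
        = (LINT a:{0<..}|lborel. exp (- a) * a powr (\<nu> - 1) - s * g * (exp (- a) * a powr (\<nu> - 2)))"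
    using int1 int2 Gamma_set_integral(2)[of \<nu>] Gamma_set_integral(2)[of "\<nu> - 1"] assms
    by (subst set_integral_diff(2)) (auto simp: diff_diff_eq)
  also have "\<dots> \<le> alpha_integral \<nu> s g 0"
    unfolding alpha_integral_def
    using alpha_integrand_integrable[of \<nu> g s 0] alpha_integrand_zero_index_ge[of _ g s \<nu>]
      int1 int2 assms
    by (intro set_integral_mono) auto
  finally show ?thesis .
qed

lemma alpha_integral_pos_index_le:
  assumes "\<nu> > 1" "g > 0" "s \<ge> 0" "k \<ge> 1"
  shows "alpha_integral \<nu> s g k \<le> g powr (1 - real k) * Gamma (\<nu> - 1)"
proof -
  have int2: "set_integrable lborel {0<..} (\<lambda>a. exp (- a) * a powr (\<nu> - 2))"
    and Gamma_pred: "(LINT a:{0<..}|lborel. exp (- a) * a powr (\<nu> - 2)) = Gamma (\<nu> - 1)"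
    using Gamma_set_integral[of "\<nu> - 1"] assms by (simp_all add: diff_diff_eq)
  have "alpha_integral \<nu> s g k
      \<le> (LINT a:{0<..}|lborel. g powr (1 - real k) * (exp (- a) * a powr (\<nu> - 2)))"
    unfolding alpha_integral_def
    using alpha_integrand_integrable[of \<nu> g s k] alpha_integrand_le_pos_index[of _ g s k \<nu>]
      int2 assms
    by (intro set_integral_mono) auto
  then show ?thesis
    using Gamma_pred by simp
qed

lemma Gamma_pred_div_Gamma:
  fixes \<nu> :: real
  assumes "\<nu> > 1"
  shows "Gamma (\<nu> - 1) / Gamma \<nu> = 1 / (\<nu> - 1)"
proof -
  have "Gamma \<nu> = (\<nu> - 1) * Gamma (\<nu> - 1)"
    using Gamma_plus1[of "\<nu> - 1"] assms nonpos_Ints_nonpos[of "\<nu> - 1"] by force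
  moreover have "Gamma (\<nu> - 1) > 0"
    using assms by simp
  ultimately show ?thesis
    by simp
qed

lemma alpha_integral_zero_index_tendsto:
  assumes "g > 0" "s \<ge> 0"
  shows "((\<lambda>\<nu>. alpha_integral \<nu> s g 0 / Gamma \<nu>) \<longlongrightarrow> 1) at_top"
proof (rule tendsto_sandwich)
  show "\<forall>\<^sub>F \<nu> in at_top. 1 - s * g / (\<nu> - 1) \<le> alpha_integral \<nu> s g 0 / Gamma \<nu>"
    using eventually_gt_at_top[of 1]
  proof eventually_elim
    case (elim \<nu>)
    have "Gamma \<nu> \<noteq> 0"
      using Gamma_real_pos[of \<nu>] elim by force
    then have "(Gamma \<nu> - s * g * Gamma (\<nu> - 1)) / Gamma \<nu> = 1 - s * g * (Gamma (\<nu> - 1) / Gamma \<nu>)"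
      by (simp add: diff_divide_distrib)
    then have "1 - s * g / (\<nu> - 1) = (Gamma \<nu> - s * g * Gamma (\<nu> - 1)) / Gamma \<nu>"
      by (simp add: Gamma_pred_div_Gamma[OF elim])
    also have "\<dots> \<le> alpha_integral \<nu> s g 0 / Gamma \<nu>"
      using alpha_integral_zero_index_ge[OF elim assms] elim
      by (intro divide_right_mono) auto
    finally show ?case .
  qed
  show "\<forall>\<^sub>F \<nu> in at_top. alpha_integral \<nu> s g 0 / Gamma \<nu> \<le> 1"
    using eventually_gt_at_top[of 0]
    by eventually_elim (use alpha_integral_zero_index_le assms in auto)
  show "((\<lambda>\<nu>. 1 - s * g / (\<nu> - 1)) \<longlongrightarrow> 1) at_top"
    by real_asymp
qed simp

lemma alpha_integral_pos_index_tendsto: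
  assumes "g > 0" "s \<ge> 0" "k \<ge> 1"
  shows "((\<lambda>\<nu>. alpha_integral \<nu> s g k / Gamma \<nu>) \<longlongrightarrow> 0) at_top"
proof (rule tendsto_sandwich)
  show "\<forall>\<^sub>F \<nu> in at_top. 0 \<le> alpha_integral \<nu> s g k / Gamma \<nu>"
    using eventually_gt_at_top[of 0]
    by eventually_elim (use alpha_integral_nonneg assms in auto)
  show "\<forall>\<^sub>F \<nu> in at_top. alpha_integral \<nu> s g k / Gamma \<nu> \<le> g powr (1 - real k) / (\<nu> - 1)"
    using eventually_gt_at_top[of 1]
  proof eventually_elim
    case (elim \<nu>)
    have "alpha_integral \<nu> s g k / Gamma \<nu> \<le> g powr (1 - real k) * Gamma (\<nu> - 1) / Gamma \<nu>"
      using alpha_integral_pos_index_le[OF elim assms] elim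
      by (intro divide_right_mono) auto
    also have "\<dots> = g powr (1 - real k) / (\<nu> - 1)"
      using Gamma_pred_div_Gamma[OF elim] by (simp add: times_divide_eq_right[symmetric])
    finally show ?case .
  qed
  show "((\<lambda>\<nu>. g powr (1 - real k) / (\<nu> - 1)) \<longlongrightarrow> 0) at_top"
    by real_asymp
qed simp

theorem theorem9:
  fixes d :: nat and \<gamma> :: real and k :: nat
  assumes "d \<ge> 1" and "\<gamma> > 0"
  shows "((\<lambda>\<nu>. alpha d \<nu> \<gamma> k) \<longlongrightarrow> (if k = 0 then 1 else 0)) at_top"
proof -
  have s: "real d / 2 > 0" and g: "\<gamma>\<^sup>2 > 0"
    using assms by auto
  show ?thesis
  proof (cases "k = 0")
    case True
    then show ?thesis
      using alpha_integral_zero_index_tendsto[OF g less_imp_le[OF s]] Gamma_real_pos[OF s]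
      by (simp add: alpha_eq_alpha_integral)
  next
    case False
    have "((\<lambda>\<nu>. alpha d \<nu> \<gamma> k) \<longlongrightarrow> 0) at_top"
      unfolding alpha_eq_alpha_integral
      using False by (intro tendsto_mult_right_zero alpha_integral_pos_index_tendsto g less_imp_le[OF s]) simp
    then show ?thesis
      using False by simp
  qed
qed

end
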